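(* Consider the inviscid Hou–Li model $$u_t+2\psi u_z=2u\psi_z,\qquad \omega_t+2\psi\omega_z=(u^2)_z,\qquad -\psi_{zz}=\omega,$$ for $2\pi$-periodic functions of $z$. There exists a constant $\delta_0>0$ such that for every $\alpha\in(1-\delta_0,1)$ the model develops a finite-time singularity from some $C^\alpha$ initial data. Moreover, there exist $C^\alpha$, $2\pi$-periodic functions $(\omega_\infty,u_\infty,\psi_\infty)$ with $-\psi_\infty''=\omega_\infty$ and a constant $c_{u,\infty}<0$ such that $(\omega,u,\psi)(x,t)=(1+c_{u,\infty}t)^{-1}(\omega_\infty,u_\infty,\psi_\infty)(x)$ is a self-similar solution blowing up at $T=-1/c_{u,\infty}$ (neither expanding nor focusing).
   Context: The unknowns $u,\omega,\psi$ are odd and $2\pi$-periodic in $z$, and $\psi$ is the unique odd $2\pi$-periodic solution of $-\psi_{zz}=\omega$. $C^\alpha$ denotes the Hölder space of exponent $\alpha$. *)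

theory Defs
  imports "HOL-Analysis.Analysis"
begin

text \<open>Hoelder continuity of exponent alpha (global, on the real line; for 2pi-periodic
  functions this is the usual C^alpha seminorm condition; boundedness follows from
  continuity and periodicity).\<close>
definition holder :: "real \<Rightarrow> (real \<Rightarrow> real) \<Rightarrow> bool" where
  "holder \<alpha> f \<longleftrightarrow> (\<exists>M. \<forall>x y. \<bar>f x - f y\<bar> \<le> M * \<bar>x - y\<bar> powr \<alpha>)"

definition periodic2pi :: "(real \<Rightarrow> real) \<Rightarrow> bool" where
  "periodic2pi f \<longleftrightarrow> (\<forall>x. f (x + 2 * pi) = f x)"

definition odd_fun :: "(real \<Rightarrow> real) \<Rightarrow> bool" where
  "odd_fun f \<longleftrightarrow> (\<forall>x. f (- x) = - f x)"

definition stream_fun :: "(real \<Rightarrow> real) \<Rightarrow> (real \<Rightarrow> real) \<Rightarrow> bool" where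
  "stream_fun \<psi> \<omega> \<longleftrightarrow>
     (\<forall>z. \<psi> differentiable (at z)) \<and>
     (\<forall>z. (deriv \<psi> has_real_derivative - \<omega> z) (at z))"

definition test_fun :: "(real \<Rightarrow> real) \<Rightarrow> (real \<Rightarrow> real) \<Rightarrow> bool" where
  "test_fun \<phi> d\<phi> \<longleftrightarrow> periodic2pi \<phi> \<and> continuous_on UNIV d\<phi> \<and>
     (\<forall>x. (\<phi> has_real_derivative d\<phi> x) (at x))"

text \<open>Weak (distributional in z, classical in t) solution of the inviscid Hou--Li model
    u_t + 2 psi u_z = 2 u psi_z,  omega_t + 2 psi omega_z = (u^2)_z,  -psi_zz = omega
  on [0,T), for odd 2pi-periodic u, omega, psi (functions of (z,t)).
  Using 2 psi u_z - 2 u psi_z = 2 (psi u)_z - 4 u psi_z and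
  2 psi omega_z = 2 (psi omega)_z - 2 psi_z omega, the weak form against a periodic test
  function phi reads
    d/dt int u phi = int (2 psi u phi' + 4 u psi_z phi),
    d/dt int omega phi = int (2 psi omega phi' + 2 psi_z omega phi - u^2 phi').\<close>
definition weak_sol_HL ::
  "real \<Rightarrow> (real \<Rightarrow> real \<Rightarrow> real) \<Rightarrow> (real \<Rightarrow> real \<Rightarrow> real) \<Rightarrow> (real \<Rightarrow> real \<Rightarrow> real) \<Rightarrow> bool"
where
  "weak_sol_HL T \<omega> u \<psi> \<longleftrightarrow>
    (\<forall>t\<in>{0..<T}.
        continuous_on UNIV (\<lambda>z. u z t) \<and> continuous_on UNIV (\<lambda>z. \<omega> z t) \<and>
        periodic2pi (\<lambda>z. u z t) \<and> periodic2pi (\<lambda>z. \<omega> z t) \<and> periodic2pi (\<lambda>z. \<psi> z t) \<and>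
        odd_fun (\<lambda>z. u z t) \<and> odd_fun (\<lambda>z. \<omega> z t) \<and> odd_fun (\<lambda>z. \<psi> z t) \<and>
        stream_fun (\<lambda>z. \<psi> z t) (\<lambda>z. \<omega> z t)) \<and>
    (\<forall>\<phi> d\<phi>. test_fun \<phi> d\<phi> \<longrightarrow>
       continuous_on {0..<T} (\<lambda>t. integral {0..2*pi} (\<lambda>z. u z t * \<phi> z)) \<and>
       continuous_on {0..<T} (\<lambda>t. integral {0..2*pi} (\<lambda>z. \<omega> z t * \<phi> z)) \<and>
       (\<forall>t\<in>{0<..<T}.
          ((\<lambda>s. integral {0..2*pi} (\<lambda>z. u z s * \<phi> z)) has_real_derivative
             integral {0..2*pi} (\<lambda>z. 2 * \<psi> z t * u z t * d\<phi> z
                                   + 4 * u z t * deriv (\<lambda>y. \<psi> y t) z * \<phi> z)) (at t) \<and>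
          ((\<lambda>s. integral {0..2*pi} (\<lambda>z. \<omega> z s * \<phi> z)) has_real_derivative
             integral {0..2*pi} (\<lambda>z. 2 * \<psi> z t * \<omega> z t * d\<phi> z
                                   + 2 * deriv (\<lambda>y. \<psi> y t) z * \<omega> z t * \<phi> z
                                   - (u z t)\<^sup>2 * d\<phi> z)) (at t)))"

end

theory Submission
  imports Defs
begin

text \<open>
  With \<open>c = -2\<close> the self-similar ansatz reduces the model to the profile equations
  \<open>u + \<psi> u' = u \<psi>'\<close>, \<open>\<omega> + \<psi> \<omega>' = u u'\<close>, \<open>-\<psi>'' = \<omega>\<close>.
  In the variable \<open>s\<close> with \<open>dz/ds = \<psi>\<close> they are solved explicitly by
  \<open>\<psi> = \<lambda> exp s / cosh (m s)\<close>, \<open>u = m / cosh (m s)\<close>, \<open>\<omega> = (m\<^sup>2 / \<lambda>) exp (-s) / cosh (m s)\<close>,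
  which also satisfy \<open>\<psi> \<omega> = u\<^sup>2\<close>. For \<open>m > 1\<close> the map \<open>s \<mapsto> z\<close> is a bijection from the real
  line onto a bounded interval, normalised by \<open>\<lambda>\<close> to \<open>(0, \<pi>)\<close>, and the odd \<open>2\<pi>\<close>-periodic
  extension is the profile. Near \<open>z = 0\<close> one has \<open>z \<sim> exp ((1 + m) s)\<close>, so the profile is
  \<open>C\<^sup>\<alpha>\<close> with \<open>\<alpha> = (m - 1) / (m + 1)\<close>, which covers every \<open>\<alpha> \<in> (0, 1)\<close>. The identities
  \<open>(\<psi> u)' = u (2\<psi>' - 1)\<close> and \<open>(u\<^sup>2)' = \<omega> (2\<psi>' - 2)\<close> turn the profile equations into the
  weak formulation after one integration by parts against a periodic test function.
\<close>

section \<open>Calculus on the real line\<close>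

lemma diff_le_diff_of_deriv_le:
  fixes F G f g :: "real \<Rightarrow> real"
  assumes "\<And>x. (F has_real_derivative f x) (at x)" "\<And>x. (G has_real_derivative g x) (at x)"
    and "\<And>x. f x \<le> g x" and "s \<le> t"
  shows "F t - F s \<le> G t - G s"
proof -
  have "F t - G t \<le> F s - G s"
  proof (rule DERIV_nonpos_imp_nonincreasing[OF \<open>s \<le> t\<close>])
    show "\<exists>y. ((\<lambda>x. F x - G x) has_real_derivative y) (at x) \<and> y \<le> 0" for x
      using DERIV_diff[OF assms(1,2)] assms(3)[of x] by fastforce
  qed
  then show ?thesis
    by simp
qed

lemma has_real_derivative_exp_scaled:
  fixes c k :: real
  assumes "k \<noteq> 0"
  shows "((\<lambda>s. c / k * exp (k * s)) has_real_derivative c * exp (k * x)) (at x)"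
  using DERIV_cmult[OF DERIV_chain2[OF DERIV_exp DERIV_cmult_Id], of "c / k" k x] assms
  by (simp add: field_simps)

lemma has_real_derivative_except_locally_finite:
  fixes F G :: "real \<Rightarrow> real"
  assumes F: "continuous_on UNIV F" and G: "continuous_on UNIV G"
    and F': "\<And>x. x \<notin> E \<Longrightarrow> (F has_real_derivative G x) (at x)"
    and E: "\<And>a b. finite (E \<inter> {a..b})"
  shows "(F has_real_derivative G x) (at x)"
proof -
  define a b where "a = x - 1" and "b = x + 1"
  have F_eq: "F y = F a + integral {a..y} G" if "y \<in> {a<..<b}" for y
  proof -
    have "(G has_integral (F y - F a)) {a..y}"
    proof (rule fundamental_theorem_of_calculus_interior_strong[OF E[of a b]])
      show "a \<le> y" "continuous_on {a..y} F"
        using that continuous_on_subset[OF F] by auto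
      show "(F has_vector_derivative G t) (at t)" if "t \<in> {a<..<y} - E \<inter> {a..b}" for t
        using that \<open>y \<in> {a<..<b}\<close> F'[of t] by (auto simp: has_real_derivative_iff_has_vector_derivative)
    qed
    then show ?thesis
      by (simp add: integral_unique)
  qed
  have "((\<lambda>y. integral {a..y} G) has_real_derivative G x) (at x within {a..b})"
    by (rule integral_has_real_derivative[OF continuous_on_subset[OF G]]) (auto simp: a_def b_def)
  then have "((\<lambda>y. F a + integral {a..y} G) has_real_derivative G x) (at x)"
    using at_within_interior[of x "{a..b}"] by (auto intro!: derivative_eq_intros simp: a_def b_def)
  then show ?thesis
    by (rule has_field_derivative_transform_within_open[of _ _ _ "{a<..<b}"])
      (use F_eq in \<open>auto simp: a_def b_def\<close>)
qed

lemma powr_diff_le_powr_diff: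
  fixes x y :: real
  assumes "0 \<le> x" "x \<le> y" "0 < \<alpha>" "\<alpha> \<le> 1"
  shows "y powr \<alpha> - x powr \<alpha> \<le> (y - x) powr \<alpha>"
proof (cases "y = 0")
  case True
  then show ?thesis
    using assms by simp
next
  case False
  then have "0 < y"
    using assms by linarith
  have le_powr: "t \<le> t powr \<alpha>" if "0 \<le> t" "t \<le> 1" for t :: real
    using that assms(3,4) powr_mono'[of \<alpha> 1 t] by (cases "t = 0") auto
  have "1 = x / y + (y - x) / y"
    using \<open>0 < y\<close> by (simp add: field_simps)
  also have "\<dots> \<le> (x / y) powr \<alpha> + ((y - x) / y) powr \<alpha>"
    using assms \<open>0 < y\<close> by (intro add_mono le_powr) auto
  also have "\<dots> = (x powr \<alpha> + (y - x) powr \<alpha>) / y powr \<alpha>"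
    using assms \<open>0 < y\<close> by (simp add: powr_divide add_divide_distrib)
  finally show ?thesis
    using \<open>0 < y\<close> by (simp add: field_simps)
qed

lemma abs_diff_le_powr_of_deriv_bound:
  fixes f f' :: "real \<Rightarrow> real"
  assumes f: "continuous_on {0..b} f"
    and f': "\<And>z. 0 < z \<Longrightarrow> z < b \<Longrightarrow> (f has_real_derivative f' z) (at z)"
    and bound: "\<And>z. 0 < z \<Longrightarrow> z < b \<Longrightarrow> \<bar>f' z\<bar> \<le> C * z powr (\<alpha> - 1)"
    and "0 \<le> C" "0 < \<alpha>" "\<alpha> \<le> 1"
    and xy: "0 \<le> x" "x \<le> y" "y \<le> b"
  shows "\<bar>f y - f x\<bar> \<le> C / \<alpha> * (y - x) powr \<alpha>"
proof -
  have g': "((\<lambda>z. C / \<alpha> * z powr \<alpha>) has_real_derivative C * z powr (\<alpha> - 1)) (at z)" if "0 < z" for z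
    using that \<open>0 < \<alpha>\<close> by (auto intro!: derivative_eq_intros)
  have g: "continuous_on {x..y} (\<lambda>z. C / \<alpha> * z powr \<alpha>)"
    using xy \<open>0 < \<alpha>\<close>
    by (intro continuous_on_mult[OF continuous_on_const] continuous_on_powr'[OF continuous_on_id continuous_on_const]) auto
  have f_xy: "continuous_on {x..y} f"
    using f by (rule continuous_on_subset) (use xy in auto)
  have "C / \<alpha> * x powr \<alpha> + \<sigma> * f x \<le> C / \<alpha> * y powr \<alpha> + \<sigma> * f y" if "\<bar>\<sigma>\<bar> = 1" for \<sigma>
  proof (rule DERIV_nonneg_imp_increasing_open[OF xy(2)])
    fix z assume z: "x < z" "z < y"
    have "\<bar>\<sigma> * f' z\<bar> \<le> C * z powr (\<alpha> - 1)"
      using bound[of z] z xy that by (simp add: abs_mult)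
    then have "\<sigma> * f' z \<ge> - (C * z powr (\<alpha> - 1))"
      by linarith
    then show "\<exists>D. ((\<lambda>z. C / \<alpha> * z powr \<alpha> + \<sigma> * f z) has_real_derivative D) (at z) \<and> 0 \<le> D"
      using DERIV_add[OF g'[of z] DERIV_cmult[OF f'[of z], of \<sigma>]] z xy by (intro exI) auto
  qed (rule continuous_on_add[OF g continuous_on_mult[OF continuous_on_const f_xy]])
  from this[of 1] this[of "-1"]
  have "\<bar>f y - f x\<bar> \<le> C / \<alpha> * (y powr \<alpha> - x powr \<alpha>)"
    by (simp add: algebra_simps)
  also have "\<dots> \<le> C / \<alpha> * (y - x) powr \<alpha>"
    using assms xy by (intro mult_left_mono powr_diff_le_powr_diff) auto
  finally show ?thesis .
qed

section \<open>Odd and even periodic extensions\<close>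

lemma arccos_cos_bounds: "0 \<le> arccos (cos z)" "arccos (cos z) \<le> pi"
  by (simp_all add: arccos_lbound arccos_ubound)

lemma arccos_cos_le_abs: "arccos (cos z) \<le> \<bar>z\<bar>"
  using arccos_cos_eq_abs[of z] arccos_cos_bounds(2)[of z] by (cases "\<bar>z\<bar> \<le> pi") auto

lemma arccos_cos_lipschitz: "\<bar>arccos (cos x) - arccos (cos y)\<bar> \<le> \<bar>x - y\<bar>"
proof -
  have "arccos (cos x) \<le> arccos (cos y) + \<bar>x - y\<bar>" for x y
  proof -
    obtain k where k: "arccos (cos y) = \<bar>y - of_int k * (2 * pi)\<bar>"
      using arccos_cos_eq_abs_2pi by blast
    have "cos (of_int k * (2 * pi)) = 1" "sin (of_int k * (2 * pi)) = 0"
      by (metis cos_int_2pin mult.commute, metis sin_int_2pin mult.commute)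
    then have "cos x = cos (x - of_int k * (2 * pi))"
      by (simp add: cos_diff)
    then have "arccos (cos x) \<le> \<bar>x - of_int k * (2 * pi)\<bar>"
      using arccos_cos_le_abs by metis
    then show ?thesis
      using k by linarith
  qed
  from this[of x y] this[of y x] show ?thesis
    by linarith
qed

lemma abs_cos_less_1_iff: "\<bar>cos (z::real)\<bar> < 1 \<longleftrightarrow> sin z \<noteq> 0"
proof -
  have "\<bar>cos z\<bar> < 1 \<longleftrightarrow> (cos z)\<^sup>2 < 1"
    by (simp add: abs_square_less_1)
  also have "\<dots> \<longleftrightarrow> 0 < (sin z)\<^sup>2"
    using sin_cos_squared_add[of z] by linarith
  finally show ?thesis
    by simp
qed

lemma arccos_cos_in_open:
  assumes "sin z \<noteq> 0" shows "0 < arccos (cos z)" "arccos (cos z) < pi"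
  using arccos_lt_bounded[of "cos z"] abs_cos_less_1_iff[of z] assms by auto

lemma arccos_cos_at_sin_zero:
  assumes "sin z = 0" shows "arccos (cos z) = 0 \<or> arccos (cos z) = pi"
proof -
  have "cos z = 1 \<or> cos z = - 1"
    using sin_cos_squared_add[of z] assms by (simp add: power2_eq_1_iff)
  then show ?thesis
    by auto
qed

lemma has_real_derivative_arccos_cos:
  assumes "sin z \<noteq> 0"
  shows "((\<lambda>z. arccos (cos z)) has_real_derivative sgn (sin z)) (at z)"
proof -
  have c: "- 1 < cos z" "cos z < 1"
    using abs_cos_less_1_iff[of z] assms by auto
  have "sqrt (1 - (cos z)\<^sup>2) = \<bar>sin z\<bar>"
    by (simp flip: sin_squared_eq)
  then have "inverse (- sqrt (1 - (cos z)\<^sup>2)) * - sin z = sgn (sin z)"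
    using assms by (simp add: sgn_if field_simps)
  then show ?thesis
    using DERIV_chain2[OF DERIV_arccos[OF c] DERIV_cos[of z]] by simp
qed

lemma finite_sin_zeros: "finite ({z. sin z = 0} \<inter> {a..b::real})"
proof -
  have "{z. sin z = 0} \<inter> {a..b} \<subseteq> (\<lambda>j::int. of_int j * pi) ` {\<lceil>a / pi\<rceil>..\<lfloor>b / pi\<rfloor>}"
  proof
    fix z assume z: "z \<in> {z. sin z = 0} \<inter> {a..b}"
    then obtain j :: int where j: "z = of_int j * pi"
      using sin_zero_iff_int2 by auto
    then have "a / pi \<le> of_int j" "of_int j \<le> b / pi"
      using z by (auto simp: field_simps)
    then show "z \<in> (\<lambda>j::int. of_int j * pi) ` {\<lceil>a / pi\<rceil>..\<lfloor>b / pi\<rfloor>}"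
      using j by (auto simp: ceiling_le_iff le_floor_iff)
  qed
  then show ?thesis
    by (rule finite_subset) auto
qed

text \<open>\<open>arccos (cos z)\<close> is the distance from \<open>z\<close> to \<open>2\<pi>\<int>\<close> and \<open>sgn (sin z)\<close> tells on which side
  of it \<open>z\<close> lies, so for \<open>f\<close> on \<open>[0, \<pi>]\<close> these are its odd and even \<open>2\<pi>\<close>-periodic extensions
  (the odd one vanishes on \<open>\<pi>\<int>\<close>, and is continuous iff \<open>f 0 = f \<pi> = 0\<close>).\<close>

definition odd_ext :: "(real \<Rightarrow> real) \<Rightarrow> real \<Rightarrow> real" where
  "odd_ext f z = sgn (sin z) * f (arccos (cos z))"

definition even_ext :: "(real \<Rightarrow> real) \<Rightarrow> real \<Rightarrow> real" where
  "even_ext f z = f (arccos (cos z))"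

lemma periodic2pi_odd_ext: "periodic2pi (odd_ext f)"
  and periodic2pi_even_ext: "periodic2pi (even_ext f)"
  by (simp_all add: periodic2pi_def odd_ext_def even_ext_def)

lemma odd_fun_odd_ext: "odd_fun (odd_ext f)"
  by (simp add: odd_fun_def odd_ext_def sgn_minus)

lemma odd_ext_eq: "0 < z \<Longrightarrow> z < pi \<Longrightarrow> odd_ext f z = f z"
  by (simp add: odd_ext_def sin_gt_zero arccos_cos)

lemma odd_ext_mult:
  assumes "f 0 = 0" "f pi = 0"
  shows "odd_ext f z * odd_ext g z = even_ext (\<lambda>z. f z * g z) z"
proof (cases "sin z = 0")
  case True
  then show ?thesis
    using arccos_cos_at_sin_zero[of z] assms by (auto simp: odd_ext_def even_ext_def)
next
  case False
  then have "sgn (sin z) * sgn (sin z) = 1"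
    by (simp add: sgn_if)
  then show ?thesis
    unfolding odd_ext_def even_ext_def by (metis mult.assoc mult.left_commute mult_1)
qed

lemma continuous_on_even_ext:
  "continuous_on {0..pi} f \<Longrightarrow> continuous_on UNIV (even_ext f)"
  unfolding even_ext_def[abs_def]
  by (erule continuous_on_compose2) (auto intro!: continuous_intros simp: arccos_lbound arccos_ubound)

lemma continuous_on_odd_ext:
  assumes f: "continuous_on {0..pi} f" and "f 0 = 0" "f pi = 0"
  shows "continuous_on UNIV (odd_ext f)"
  unfolding continuous_on_eq_continuous_at[OF open_UNIV]
proof
  fix z :: real
  have even: "isCont (even_ext f) z"
    using continuous_on_even_ext[OF f] by (simp add: continuous_on_eq_continuous_at)
  show "isCont (odd_ext f) z"
  proof (cases "sin z = 0")
    case True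
    then have "odd_ext f z = 0" "even_ext f z = 0"
      using arccos_cos_at_sin_zero[of z] assms by (auto simp: odd_ext_def even_ext_def)
    moreover have "\<bar>odd_ext f y\<bar> \<le> \<bar>even_ext f y\<bar>" for y
      by (simp add: odd_ext_def even_ext_def abs_mult sgn_if)
    ultimately show ?thesis
      using even unfolding isCont_def
      by (auto intro!: Lim_null_comparison[where g = "\<lambda>y. \<bar>even_ext f y\<bar>"] tendsto_rabs_zero)
  next
    case False
    have "isCont (\<lambda>y. sgn (sin y) * even_ext f y) z"
      using False even by (intro continuous_intros) auto
    then show ?thesis
      by (simp add: odd_ext_def[abs_def] even_ext_def)
  qed
qed

lemma has_real_derivative_ext_off_sin_zeros:
  assumes f': "\<And>x. 0 < x \<Longrightarrow> x < pi \<Longrightarrow> (f has_real_derivative f' x) (at x)"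
    and "sin z \<noteq> 0"
  shows "(even_ext f has_real_derivative odd_ext f' z) (at z)"
    and "(odd_ext f has_real_derivative even_ext f' z) (at z)"
proof -
  show even: "(even_ext f has_real_derivative odd_ext f' z) (at z)"
    using DERIV_chain2[OF f' has_real_derivative_arccos_cos] arccos_cos_in_open assms(2)
    by (simp add: even_ext_def[abs_def] odd_ext_def mult.commute)
  have "\<forall>\<^sub>F y in nhds z. sgn (sin y) = sgn (sin z)"
  proof (cases "sin z > 0")
    case True
    have "\<forall>\<^sub>F y in nhds z. sin y > 0"
      using order_tendstoD(1)[OF tendsto_sin[OF filterlim_ident] True] .
    then show ?thesis
      by eventually_elim (use True in auto)
  next
    case False
    then have neg: "sin z < 0"
      using assms(2) by linarith
    have "\<forall>\<^sub>F y in nhds z. sin y < 0"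
      using order_tendstoD(2)[OF tendsto_sin[OF filterlim_ident] neg] .
    then show ?thesis
      by eventually_elim (use neg in auto)
  qed
  then have "\<forall>\<^sub>F y in nhds z. odd_ext f y = sgn (sin z) * even_ext f y"
    by eventually_elim (simp add: odd_ext_def even_ext_def)
  moreover have "sgn (sin z) * odd_ext f' z = even_ext f' z"
    using assms(2) by (simp add: odd_ext_def even_ext_def sgn_if)
  moreover note DERIV_cmult[OF even, of "sgn (sin z)"]
  ultimately show "(odd_ext f has_real_derivative even_ext f' z) (at z)"
    by (subst DERIV_cong_ev[OF refl]) auto
qed

lemma has_real_derivative_odd_ext:
  assumes f: "continuous_on {0..pi} f" "f 0 = 0" "f pi = 0"
    and f': "\<And>x. 0 < x \<Longrightarrow> x < pi \<Longrightarrow> (f has_real_derivative f' x) (at x)"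
    and "continuous_on {0..pi} f'"
  shows "(odd_ext f has_real_derivative even_ext f' x) (at x)"
proof (rule has_real_derivative_except_locally_finite[OF _ _ _ finite_sin_zeros])
  show "continuous_on UNIV (odd_ext f)" "continuous_on UNIV (even_ext f')"
    by (rule continuous_on_odd_ext[OF f], rule continuous_on_even_ext[OF assms(5)])
  show "(odd_ext f has_real_derivative even_ext f' y) (at y)" if "y \<notin> {z. sin z = 0}" for y
    using has_real_derivative_ext_off_sin_zeros(2)[OF f'] that by blast
qed

lemma has_real_derivative_even_ext:
  assumes "continuous_on {0..pi} f"
    and f': "\<And>x. 0 < x \<Longrightarrow> x < pi \<Longrightarrow> (f has_real_derivative f' x) (at x)"
    and "continuous_on {0..pi} f'" "f' 0 = 0" "f' pi = 0"
  shows "(even_ext f has_real_derivative odd_ext f' x) (at x)"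
proof (rule has_real_derivative_except_locally_finite[OF _ _ _ finite_sin_zeros])
  show "continuous_on UNIV (even_ext f)" "continuous_on UNIV (odd_ext f')"
    by (rule continuous_on_even_ext[OF assms(1)], rule continuous_on_odd_ext[OF assms(3-5)])
  show "(even_ext f has_real_derivative odd_ext f' y) (at y)" if "y \<notin> {z. sin z = 0}" for y
    using has_real_derivative_ext_off_sin_zeros(1)[OF f'] that by blast
qed

lemma abs_odd_ext_diff_le_same_sign:
  assumes "f 0 = 0" "f pi = 0" "0 \<le> sin x * sin y"
  shows "\<bar>odd_ext f x - odd_ext f y\<bar> \<le> \<bar>f (arccos (cos x)) - f (arccos (cos y))\<bar>"
proof (cases "sin x = 0 \<or> sin y = 0")
  case True
  have vanish: "f (arccos (cos z)) = 0" if "sin z = 0" for z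
    using arccos_cos_at_sin_zero[OF that] assms(1,2) by auto
  have abs_sgn: "\<bar>sgn (sin z)\<bar> \<le> 1" for z :: real
    by (auto simp: sgn_if)
  from True vanish
  have "\<bar>odd_ext f x - odd_ext f y\<bar> = \<bar>sgn (sin y) * f (arccos (cos y))\<bar> \<and> f (arccos (cos x)) = 0 \<or>
      \<bar>odd_ext f x - odd_ext f y\<bar> = \<bar>sgn (sin x) * f (arccos (cos x))\<bar> \<and> f (arccos (cos y)) = 0"
    by (auto simp: odd_ext_def)
  then show ?thesis
    using abs_sgn[of x] abs_sgn[of y]
    by (auto simp: abs_mult abs_minus_commute intro: mult_left_le_one_le)
next
  case False
  then have "sgn (sin x) = sgn (sin y)"
    using assms(3) by (auto simp: sgn_if zero_le_mult_iff)
  then have "odd_ext f x - odd_ext f y = sgn (sin x) * (f (arccos (cos x)) - f (arccos (cos y)))"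
    by (simp add: odd_ext_def right_diff_distrib)
  then show ?thesis
    using False by (simp add: abs_mult)
qed

lemma holder_odd_ext:
  assumes "f 0 = 0" "f pi = 0" "0 < \<alpha>"
    and f: "\<And>x y. x \<in> {0..pi} \<Longrightarrow> y \<in> {0..pi} \<Longrightarrow> \<bar>f x - f y\<bar> \<le> K * \<bar>x - y\<bar> powr \<alpha>"
  shows "holder \<alpha> (odd_ext f)"
proof -
  have "0 \<le> K * pi powr \<alpha>"
    using f[of pi 0] by simp
  then have "0 \<le> K"
    by (simp add: zero_le_mult_iff)
  have same_side: "\<bar>odd_ext f x - odd_ext f y\<bar> \<le> K * \<bar>x - y\<bar> powr \<alpha>"
    if "0 \<le> sin x * sin y" for x y
  proof -
    have "\<bar>odd_ext f x - odd_ext f y\<bar> \<le> \<bar>f (arccos (cos x)) - f (arccos (cos y))\<bar>"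
      by (rule abs_odd_ext_diff_le_same_sign[OF assms(1,2) that])
    also have "\<dots> \<le> K * \<bar>arccos (cos x) - arccos (cos y)\<bar> powr \<alpha>"
      by (rule f) (simp_all add: arccos_cos_bounds)
    also have "\<dots> \<le> K * \<bar>x - y\<bar> powr \<alpha>"
      using \<open>0 \<le> K\<close> \<open>0 < \<alpha>\<close> arccos_cos_lipschitz by (intro mult_left_mono powr_mono2) auto
    finally show ?thesis .
  qed
  have "\<bar>odd_ext f x - odd_ext f y\<bar> \<le> (2 * K) * \<bar>x - y\<bar> powr \<alpha>" for x y
  proof (cases "0 \<le> sin x * sin y")
    case True
    have "K * \<bar>x - y\<bar> powr \<alpha> \<le> (2 * K) * \<bar>x - y\<bar> powr \<alpha>"
      using \<open>0 \<le> K\<close> by (intro mult_right_mono) auto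
    then show ?thesis
      using same_side[OF True] by linarith
  next
    case False
    then have "sin x * sin y < 0"
      by simp
    then have "0 \<in> closed_segment (sin x) (sin y)"
      by (auto simp: closed_segment_eq_real_ivl mult_less_0_iff)
    moreover have "continuous_on (closed_segment x y) sin"
      by (simp add: closed_segment_eq_real_ivl continuous_on_sin_real)
    ultimately obtain w where w: "w \<in> closed_segment x y" "sin w = 0"
      using IVT'_closed_segment_real by blast
    then have "\<bar>x - w\<bar> \<le> \<bar>x - y\<bar>" "\<bar>w - y\<bar> \<le> \<bar>x - y\<bar>"
      using dist_in_closed_segment[OF w(1)] by (auto simp: dist_real_def abs_minus_commute)
    then have "K * \<bar>x - w\<bar> powr \<alpha> \<le> K * \<bar>x - y\<bar> powr \<alpha>"
        "K * \<bar>w - y\<bar> powr \<alpha> \<le> K * \<bar>x - y\<bar> powr \<alpha>"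
      using \<open>0 \<le> K\<close> \<open>0 < \<alpha>\<close> by (auto intro!: mult_left_mono powr_mono2)
    moreover have "\<bar>odd_ext f x - odd_ext f y\<bar> \<le> K * \<bar>x - w\<bar> powr \<alpha> + K * \<bar>w - y\<bar> powr \<alpha>"
      using same_side[of x w] same_side[of w y] w(2) by simp
    ultimately show ?thesis
      by linarith
  qed
  then show ?thesis
    unfolding holder_def by blast
qed

section \<open>An explicit profile\<close>

locale hou_li_profile =
  fixes m :: real
  assumes m_gt_1: "1 < m"
begin

definition q :: "real \<Rightarrow> real \<Rightarrow> real" where
  "q a s = exp (a * s) / cosh (m * s)"

lemma q_pos: "0 < q a s"
  by (simp add: q_def)

lemma has_real_derivative_q: "(q a has_real_derivative q a s * (a - m * tanh (m * s))) (at s)"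
  unfolding q_def[abs_def]
  by (auto intro!: derivative_eq_intros simp: tanh_def field_simps power2_eq_square)

lemma isCont_q: "isCont (q a) s"
  using has_real_derivative_q DERIV_isCont by blast

lemma q_le_exp_minus: "q a s \<le> 2 * exp ((a - m) * s)"
proof -
  have "q a s \<le> exp (a * s) / (exp (m * s) / 2)"
    unfolding q_def by (rule divide_left_mono) (auto simp: cosh_field_def intro!: mult_pos_pos add_pos_pos)
  also have "\<dots> = 2 * exp ((a - m) * s)"
    by (simp add: left_diff_distrib exp_diff)
  finally show ?thesis .
qed

lemma q_le_exp_plus: "q a s \<le> 2 * exp ((a + m) * s)"
proof -
  have "q a s \<le> exp (a * s) / (exp (- (m * s)) / 2)"
    unfolding q_def by (rule divide_left_mono) (auto simp: cosh_field_def intro!: mult_pos_pos add_pos_pos)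
  also have "\<dots> = 2 * exp ((a + m) * s)"
    by (simp add: distrib_right exp_add exp_minus field_simps)
  finally show ?thesis .
qed

lemma q_tendsto_at_top: "a < m \<Longrightarrow> (q a \<longlongrightarrow> 0) at_top"
proof (rule tendsto_sandwich[where f = "\<lambda>_. 0" and h = "\<lambda>s. 2 * exp ((a - m) * s)"])
  assume "a < m"
  then have "filterlim (\<lambda>s. (a - m) * s) at_bot at_top"
    by (intro filterlim_tendsto_neg_mult_at_bot[OF tendsto_const] filterlim_ident) auto
  then show "((\<lambda>s. 2 * exp ((a - m) * s)) \<longlongrightarrow> 0) at_top"
    using tendsto_mult_right_zero filterlim_compose[OF exp_at_bot] by blast
qed (simp_all add: less_imp_le[OF q_pos] q_le_exp_minus)

lemma q_tendsto_at_bot: "- m < a \<Longrightarrow> (q a \<longlongrightarrow> 0) at_bot"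
proof (rule tendsto_sandwich[where f = "\<lambda>_. 0" and h = "\<lambda>s. 2 * exp ((a + m) * s)"])
  assume "- m < a"
  then have "filterlim (\<lambda>s. (a + m) * s) at_bot at_bot"
    by (intro filterlim_tendsto_pos_mult_at_bot[OF tendsto_const] filterlim_ident) auto
  then show "((\<lambda>s. 2 * exp ((a + m) * s)) \<longlongrightarrow> 0) at_bot"
    using tendsto_mult_right_zero filterlim_compose[OF exp_at_bot] by blast
qed (simp_all add: less_imp_le[OF q_pos] q_le_exp_plus)

lemma tanh_tendsto_at_top: "((\<lambda>s. tanh (m * s)) \<longlongrightarrow> 1) at_top"
proof -
  have "filterlim (\<lambda>s. m * s) at_top at_top"
    using m_gt_1 by (intro filterlim_tendsto_pos_mult_at_top[OF tendsto_const _ filterlim_ident]) auto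
  then show ?thesis
    by (rule filterlim_compose[OF tanh_real_at_top])
qed

lemma tanh_tendsto_at_bot: "((\<lambda>s. tanh (m * s)) \<longlongrightarrow> - 1) at_bot"
proof -
  have "filterlim (\<lambda>s. m * s) at_bot at_bot"
    using m_gt_1 by (intro filterlim_tendsto_pos_mult_at_bot[OF tendsto_const _ filterlim_ident]) auto
  then show ?thesis
    by (rule filterlim_compose[OF tanh_real_at_bot])
qed

lemma q_0_sq: "(q 0 s)\<^sup>2 = q 1 s * q (- 1) s"
  by (simp add: q_def power2_eq_square exp_minus field_simps)

lemma one_minus_tanh_sq: "1 - (tanh (m * s))\<^sup>2 = q 1 s * q (- 1) s"
proof -
  have "1 - (tanh (m * s))\<^sup>2 = ((cosh (m * s))\<^sup>2 - (sinh (m * s))\<^sup>2) / (cosh (m * s))\<^sup>2"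
    by (simp add: tanh_def power_divide diff_divide_distrib)
  also have "\<dots> = 1 / (cosh (m * s))\<^sup>2"
    using cosh_square_eq[of "m * s"] by simp
  also have "\<dots> = q 1 s * q (- 1) s"
    unfolding q_def by (simp add: power2_eq_square flip: exp_add)
  finally show ?thesis .
qed

lemma q_div_q_1: "q a s / q 1 s = exp ((a - 1) * s)"
  by (simp add: q_def left_diff_distrib exp_diff)

definition Z :: "real \<Rightarrow> real" where
  "Z = (SOME F. \<forall>s. (F has_real_derivative q 1 s) (at s))"

lemma has_real_derivative_Z: "(Z has_real_derivative q 1 s) (at s)"
proof -
  obtain F where "\<forall>s. (F has_vector_derivative q 1 s) (at s)"
    using einterval_antiderivative[of "-\<infinity>" "\<infinity>" "q 1"] isCont_q by auto
  then have "\<exists>F. \<forall>s. (F has_real_derivative q 1 s) (at s)"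
    by (auto simp: has_real_derivative_iff_has_vector_derivative)
  then have "\<forall>s. (Z has_real_derivative q 1 s) (at s)"
    unfolding Z_def by (rule someI_ex)
  then show ?thesis ..
qed

lemma Z_less: "s < t \<Longrightarrow> Z s < Z t"
  by (erule DERIV_pos_imp_increasing) (use has_real_derivative_Z q_pos in blast)

lemma Z_increment_le_at_bot: "s \<le> t \<Longrightarrow> Z t - Z s \<le> 2 / (1 + m) * exp ((1 + m) * t)"
proof -
  assume "s \<le> t"
  have "Z t - Z s \<le> 2 / (1 + m) * exp ((1 + m) * t) - 2 / (1 + m) * exp ((1 + m) * s)"
    using m_gt_1 q_le_exp_plus[of 1]
    by (intro diff_le_diff_of_deriv_le[OF has_real_derivative_Z has_real_derivative_exp_scaled _ \<open>s \<le> t\<close>])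
      (auto simp: add.commute)
  moreover have "0 \<le> 2 / (1 + m) * exp ((1 + m) * s)"
    using m_gt_1 by simp
  ultimately show ?thesis
    by linarith
qed

lemma Z_increment_le_at_top: "s \<le> t \<Longrightarrow> Z t - Z s \<le> 2 / (m - 1) * exp ((1 - m) * s)"
proof -
  assume "s \<le> t"
  have "Z t - Z s \<le> 2 / (1 - m) * exp ((1 - m) * t) - 2 / (1 - m) * exp ((1 - m) * s)"
    using m_gt_1 q_le_exp_minus[of 1]
    by (intro diff_le_diff_of_deriv_le[OF has_real_derivative_Z has_real_derivative_exp_scaled _ \<open>s \<le> t\<close>]) auto
  moreover have "2 / (1 - m) * exp ((1 - m) * t) \<le> 0"
    using m_gt_1 by (simp add: divide_nonneg_neg)
  moreover have "- (2 / (1 - m) * exp ((1 - m) * s)) = 2 / (m - 1) * exp ((1 - m) * s)"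
    using m_gt_1 by (simp add: field_simps)
  ultimately show ?thesis
    by linarith
qed

lemma bdd_below_Z: "bdd_below (range Z)"
proof (rule bdd_belowI)
  fix y assume "y \<in> range Z"
  then obtain s where s: "y = Z s" by blast
  show "Z 0 - 2 / (1 + m) \<le> y"
  proof (cases "s \<le> 0")
    case True
    then show ?thesis
      using Z_increment_le_at_bot[OF True] s by simp
  next
    case False
    have "0 < 2 / (1 + m)"
      using m_gt_1 by simp
    then show ?thesis
      using Z_less[of 0 s] False s by linarith
  qed
qed

lemma bdd_above_Z: "bdd_above (range Z)"
proof (rule bdd_aboveI)
  fix y assume "y \<in> range Z"
  then obtain t where t: "y = Z t" by blast
  show "y \<le> Z 0 + 2 / (m - 1)"
  proof (cases "0 \<le> t")
    case True
    then show ?thesis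
      using Z_increment_le_at_top[OF True] t by simp
  next
    case False
    have "0 < 2 / (m - 1)"
      using m_gt_1 by simp
    then show ?thesis
      using Z_less[of t 0] False t by linarith
  qed
qed

lemma Inf_Z_less: "Inf (range Z) < Z s"
  using cInf_lower[OF _ bdd_below_Z, of "Z (s - 1)"] Z_less[of "s - 1" s] by auto

lemma Sup_Z_greater: "Z s < Sup (range Z)"
  using cSup_upper[OF _ bdd_above_Z, of "Z (s + 1)"] Z_less[of s "s + 1"] by auto

lemma Z_minus_Inf_le: "Z t - Inf (range Z) \<le> 2 / (1 + m) * exp ((1 + m) * t)"
proof -
  have "Z t - 2 / (1 + m) * exp ((1 + m) * t) \<le> Inf (range Z)"
  proof (rule cInf_greatest)
    fix y assume "y \<in> range Z"
    then obtain s where "y = Z s" by blast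
    moreover have "0 \<le> 2 / (1 + m) * exp ((1 + m) * t)"
      using m_gt_1 by simp
    ultimately show "Z t - 2 / (1 + m) * exp ((1 + m) * t) \<le> y"
      using Z_increment_le_at_bot[of s t] Z_less[of t s] by (cases "s \<le> t") auto
  qed simp
  then show ?thesis
    by simp
qed

definition lam :: real where
  "lam = pi / (Sup (range Z) - Inf (range Z))"

definition z_of :: "real \<Rightarrow> real" where
  "z_of s = lam * (Z s - Inf (range Z))"

lemma lam_pos: "0 < lam"
  using Inf_Z_less[of 0] Sup_Z_greater[of 0] by (simp add: lam_def)

lemma has_real_derivative_z_of: "(z_of has_real_derivative lam * q 1 s) (at s)"
  unfolding z_of_def[abs_def] by (auto intro!: derivative_eq_intros has_real_derivative_Z)

lemma isCont_z_of: "isCont z_of s"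
  using has_real_derivative_z_of DERIV_isCont by blast

lemma z_of_less_iff: "z_of s < z_of t \<longleftrightarrow> s < t"
  using Z_less[of s t] Z_less[of t s] lam_pos
  by (cases s t rule: linorder_cases) (auto simp: z_of_def)

lemma z_of_inject: "z_of s = z_of t \<longleftrightarrow> s = t"
  using z_of_less_iff by (metis linorder_neqE_linordered_idom order_less_irrefl)

lemma z_of_bounds: "0 < z_of s" "z_of s < pi"
proof -
  show "0 < z_of s"
    using lam_pos Inf_Z_less[of s] by (simp add: z_of_def)
  have "z_of s < lam * (Sup (range Z) - Inf (range Z))"
    using lam_pos Sup_Z_greater[of s] by (simp add: z_of_def)
  also have "\<dots> = pi"
    using Inf_Z_less[of 0] Sup_Z_greater[of 0] by (simp add: lam_def)
  finally show "z_of s < pi" .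
qed

lemma z_of_le_exp: "z_of s \<le> lam * (2 / (1 + m)) * exp ((1 + m) * s)"
  unfolding z_of_def mult.assoc using lam_pos by (intro mult_left_mono Z_minus_Inf_le) auto

lemma z_of_surj:
  assumes "0 < z" "z < pi"
  shows "\<exists>s. z_of s = z"
proof -
  define y where "y = Inf (range Z) + z / lam"
  have "z / lam = (Sup (range Z) - Inf (range Z)) * (z / pi)"
    by (simp add: lam_def)
  also have "\<dots> < (Sup (range Z) - Inf (range Z)) * 1"
    using assms Inf_Z_less[of 0] Sup_Z_greater[of 0] by (intro mult_strict_left_mono) auto
  finally have "z / lam < Sup (range Z) - Inf (range Z)"
    by simp
  then have "Inf (range Z) < y" "y < Sup (range Z)"
    using assms lam_pos by (auto simp: y_def)
  then obtain s1 s2 where "Z s1 < y" "y < Z s2"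
    using bdd_below_Z bdd_above_Z by (auto simp: cInf_less_iff less_cSup_iff)
  moreover have "s1 \<le> s2"
    using calculation Z_less[of s2 s1] by (cases "s1 \<le> s2") auto
  moreover have "isCont Z s" for s
    using has_real_derivative_Z DERIV_isCont by blast
  ultimately obtain s where "Z s = y"
    using IVT[of Z s1 y s2] by auto
  then have "z_of s = z"
    using lam_pos by (simp add: z_of_def y_def)
  then show ?thesis ..
qed

definition s_of :: "real \<Rightarrow> real" where
  "s_of z = (THE s. z_of s = z)"

lemma s_of_z_of [simp]: "s_of (z_of s) = s"
  by (simp add: s_of_def z_of_inject)

lemma z_of_s_of: "0 < z \<Longrightarrow> z < pi \<Longrightarrow> z_of (s_of z) = z"
  using z_of_surj s_of_z_of by metis

lemma isCont_s_of:
  assumes "0 < z" "z < pi"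
  shows "isCont s_of z"
proof -
  have "isCont s_of (z_of (s_of z))"
    by (rule isCont_inverse_function[where d = 1]) (auto intro: isCont_z_of)
  then show ?thesis
    using z_of_s_of[OF assms] by simp
qed

lemma has_real_derivative_s_of:
  assumes "0 < z" "z < pi"
  shows "(s_of has_real_derivative 1 / (lam * q 1 (s_of z))) (at z)"
  using DERIV_inverse_function[OF has_real_derivative_z_of _ assms, of s_of]
    assms z_of_s_of z_of_bounds isCont_s_of lam_pos q_pos[of 1 "s_of z"]
  by (simp add: divide_inverse)

lemma s_of_at_bot: "filterlim s_of at_bot (at_right 0)"
  unfolding filterlim_at_bot eventually_at_right_field
proof (intro allI exI conjI impI)
  fix M
  show "0 < z_of M"
    by (rule z_of_bounds)
  fix z assume "0 < z" "z < z_of M"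
  then show "s_of z \<le> M"
    using z_of_bounds(2)[of M] z_of_s_of[of z] z_of_less_iff[of "s_of z" M] by auto
qed

lemma s_of_at_top: "filterlim s_of at_top (at_left pi)"
  unfolding filterlim_at_top eventually_at_left_field
proof (intro allI exI conjI impI)
  fix M
  show "z_of M < pi"
    by (rule z_of_bounds)
  fix z assume "z_of M < z" "z < pi"
  then show "M \<le> s_of z"
    using z_of_bounds(1)[of M] z_of_s_of[of z] z_of_less_iff[of M "s_of z"] by auto
qed

text \<open>\<open>q a\<close> and \<open>tanh (m s)\<close> in the variable \<open>z = z_of s\<close>, extended to \<open>[0, \<pi>]\<close> by their limits.\<close>

definition qz :: "real \<Rightarrow> real \<Rightarrow> real" where
  "qz a z = (if 0 < z \<and> z < pi then q a (s_of z) else 0)"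

definition th :: "real \<Rightarrow> real" where
  "th z = (if z \<le> 0 then - 1 else if z < pi then tanh (m * s_of z) else 1)"

lemma qz_pos: "0 < z \<Longrightarrow> z < pi \<Longrightarrow> 0 < qz a z"
  by (simp add: qz_def q_pos)

lemma qz_0_sq: "(qz 0 z)\<^sup>2 = qz 1 z * qz (- 1) z"
  by (simp add: qz_def q_0_sq)

lemma qz_ends [simp]: "qz a 0 = 0" "qz a pi = 0"
  by (simp_all add: qz_def)

lemma th_ends [simp]: "th 0 = - 1" "th pi = 1"
  using pi_gt_zero by (simp_all add: th_def not_le)

lemma continuous_on_comp_s_of:
  assumes "\<And>s. isCont g s" "(g \<longlongrightarrow> f 0) at_bot" "(g \<longlongrightarrow> f pi) at_top"
    and f: "\<And>z. 0 < z \<Longrightarrow> z < pi \<Longrightarrow> f z = g (s_of z)"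
  shows "continuous_on {0..pi} f"
proof (rule continuous_on_IccI)
  have "\<forall>\<^sub>F z in at_right 0. g (s_of z) = f z"
    unfolding eventually_at_right_field by (rule exI[of _ pi]) (simp add: f)
  then show "(f \<longlongrightarrow> f 0) (at_right 0)"
    using filterlim_compose[OF assms(2) s_of_at_bot] by (rule Lim_transform_eventually[rotated])
  have "\<forall>\<^sub>F z in at_left pi. g (s_of z) = f z"
    unfolding eventually_at_left_field by (rule exI[of _ 0]) (simp add: f)
  then show "(f \<longlongrightarrow> f pi) (at_left pi)"
    using filterlim_compose[OF assms(3) s_of_at_top] by (rule Lim_transform_eventually[rotated])
  fix z :: real assume z: "0 < z" "z < pi"
  have "\<forall>\<^sub>F y in nhds z. g (s_of y) = f y"
    using eventually_nhds_in_open[of "{0<..<pi}" z] z by (auto elim!: eventually_mono simp: f)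
  moreover have "isCont (\<lambda>y. g (s_of y)) z"
    using continuous_at_compose[OF isCont_s_of[OF z] assms(1)] by (simp add: o_def)
  ultimately have "isCont f z"
    using isCont_cong by metis
  then show "f \<midarrow>z\<rightarrow> f z"
    by (simp add: isCont_def)
qed simp

lemma has_real_derivative_comp_s_of:
  assumes z: "0 < z" "z < pi" and g: "(g has_real_derivative D) (at (s_of z))"
    and f: "\<And>y. 0 < y \<Longrightarrow> y < pi \<Longrightarrow> f y = g (s_of y)"
  shows "(f has_real_derivative D / (lam * q 1 (s_of z))) (at z)"
proof -
  have "((\<lambda>y. g (s_of y)) has_real_derivative D / (lam * q 1 (s_of z))) (at z)"
    using DERIV_chain2[OF g has_real_derivative_s_of[OF z]] by simp
  then show ?thesis
    by (rule has_field_derivative_transform_within_open[of _ _ _ "{0<..<pi}"]) (use z f in auto)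
qed

lemma continuous_on_qz: "- m < a \<Longrightarrow> a < m \<Longrightarrow> continuous_on {0..pi} (qz a)"
  by (rule continuous_on_comp_s_of[of "q a"]) (simp_all add: isCont_q q_tendsto_at_top q_tendsto_at_bot qz_def)

lemma continuous_on_th: "continuous_on {0..pi} th"
proof (rule continuous_on_comp_s_of[of "\<lambda>s. tanh (m * s)"])
  show "isCont (\<lambda>s. tanh (m * s)) s" for s
    by (intro continuous_intros) simp
  show "((\<lambda>s. tanh (m * s)) \<longlongrightarrow> th 0) at_bot" "((\<lambda>s. tanh (m * s)) \<longlongrightarrow> th pi) at_top"
    by (simp_all add: tanh_tendsto_at_top tanh_tendsto_at_bot)
qed (simp add: th_def)

lemma has_real_derivative_qz:
  assumes "0 < z" "z < pi"
  shows "(qz a has_real_derivative qz a z * (a - m * th z) / (lam * qz 1 z)) (at z)"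
  using has_real_derivative_comp_s_of[OF assms has_real_derivative_q[of a "s_of z"], of "qz a"] assms
  by (simp add: qz_def th_def)

lemma has_real_derivative_th:
  assumes "0 < z" "z < pi"
  shows "(th has_real_derivative m / lam * qz (- 1) z) (at z)"
proof -
  have "((\<lambda>s. tanh (m * s)) has_real_derivative (1 - (tanh (m * s))\<^sup>2) * m) (at s)" for s
    by (auto intro!: derivative_eq_intros)
  from has_real_derivative_comp_s_of[OF assms this, of th]
  have "(th has_real_derivative q 1 (s_of z) * q (- 1) (s_of z) * m / (lam * q 1 (s_of z))) (at z)"
    by (simp add: th_def one_minus_tanh_sq)
  then show ?thesis
    using assms q_pos[of 1 "s_of z"] lam_pos by (simp add: qz_def mult.commute)
qed

lemma one_plus_exp_s_of_le:
  obtains C where "\<And>z. 0 < z \<Longrightarrow> z < pi \<Longrightarrow> 1 + exp (- 2 * s_of z) \<le> C * z powr (- 2 / (m + 1))"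
proof
  define \<gamma> K where "\<gamma> = 2 / (m + 1)" and "K = lam * (2 / (1 + m))"
  have "0 < \<gamma>" "0 < K"
    using m_gt_1 lam_pos by (simp_all add: \<gamma>_def K_def)
  fix z assume z: "0 < z" "z < pi"
  define s where "s = s_of z"
  have "1 \<le> (pi / z) powr \<gamma>"
    using z \<open>0 < \<gamma>\<close> by (intro ge_one_powr_ge_zero) auto
  moreover have "exp (- 2 * s) \<le> (K / z) powr \<gamma>"
  proof -
    have "z \<le> K * exp ((1 + m) * s)"
      using z_of_le_exp[of s] z_of_s_of[OF z] by (simp add: s_def K_def)
    then have "exp (- ((1 + m) * s)) * z \<le> exp (- ((1 + m) * s)) * (K * exp ((1 + m) * s))"
      by (rule mult_left_mono) simp
    also have "\<dots> = K"
      by (simp add: exp_minus)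
    finally have "exp (- ((1 + m) * s)) \<le> K / z"
      by (rule pos_le_divide_eq[OF z(1), THEN iffD2])
    then have "exp (- ((1 + m) * s)) powr \<gamma> \<le> (K / z) powr \<gamma>"
      using \<open>0 < \<gamma>\<close> by (intro powr_mono2) auto
    moreover have "- ((1 + m) * s) * \<gamma> = - 2 * s"
      using m_gt_1 by (simp add: \<gamma>_def field_simps)
    then have "exp (- ((1 + m) * s)) powr \<gamma> = exp (- 2 * s)"
      by (simp only: exp_powr_real)
    ultimately show ?thesis
      by simp
  qed
  ultimately have "1 + exp (- 2 * s) \<le> (pi / z) powr \<gamma> + (K / z) powr \<gamma>"
    by linarith
  also have "\<dots> = (pi powr \<gamma> + K powr \<gamma>) * z powr (- \<gamma>)"
    by (simp add: powr_divide powr_minus_divide add_divide_distrib)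
  finally show "1 + exp (- 2 * s_of z) \<le> (pi powr \<gamma> + K powr \<gamma>) * z powr (- 2 / (m + 1))"
    by (simp add: s_def \<gamma>_def)
qed

lemma exp_le_one_plus_exp:
  fixes a s :: real
  assumes "- 1 \<le> a" "a \<le> 1"
  shows "exp ((a - 1) * s) \<le> 1 + exp (- 2 * s)"
proof (cases "0 \<le> s")
  case True
  then have "exp ((a - 1) * s) \<le> 1"
    using assms by (simp add: mult_nonpos_nonneg)
  then show ?thesis
    by (smt (verit) exp_gt_zero)
next
  case False
  then have "(a - 1) * s \<le> - 2 * s"
    using assms by (intro mult_right_mono_neg) auto
  then show ?thesis
    by (smt (verit) exp_gt_zero exp_le_cancel_iff)
qed

lemma abs_deriv_qz_le:
  assumes "- 1 \<le> a" "a \<le> 1" "0 < z" "z < pi"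
  shows "\<bar>qz a z * (a - m * th z) / (lam * qz 1 z)\<bar> \<le> (1 + m) / lam * (1 + exp (- 2 * s_of z))"
proof -
  define s where "s = s_of z"
  have "\<bar>a - m * th z\<bar> \<le> 1 + m"
  proof -
    have "\<bar>th z\<bar> \<le> 1"
      using assms tanh_real_lt_1[of "m * s"] tanh_real_gt_neg1[of "m * s"] by (simp add: th_def s_def)
    then have "\<bar>m * th z\<bar> \<le> m"
      using m_gt_1 by (simp add: abs_mult mult_left_le)
    then show ?thesis
      using assms by linarith
  qed
  moreover have "qz a z = exp ((a - 1) * s) * qz 1 z"
    using assms qz_pos[of z 1] by (simp add: qz_def q_div_q_1[symmetric] s_def)
  then have "\<bar>qz a z * (a - m * th z) / (lam * qz 1 z)\<bar> = \<bar>a - m * th z\<bar> / lam * exp ((a - 1) * s)"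
    using lam_pos qz_pos[of z 1] assms by (simp add: abs_mult abs_divide)
  ultimately have "\<bar>qz a z * (a - m * th z) / (lam * qz 1 z)\<bar> \<le> (1 + m) / lam * exp ((a - 1) * s)"
    using lam_pos by (simp add: divide_right_mono mult_right_mono)
  also have "\<dots> \<le> (1 + m) / lam * (1 + exp (- 2 * s))"
    using assms m_gt_1 lam_pos by (intro mult_left_mono exp_le_one_plus_exp) auto
  finally show ?thesis
    by (simp add: s_def)
qed

lemma holder_bound_qz:
  assumes "- 1 \<le> a" "a \<le> 1"
  obtains K where "\<And>x y. x \<in> {0..pi} \<Longrightarrow> y \<in> {0..pi} \<Longrightarrow>
    \<bar>qz a x - qz a y\<bar> \<le> K * \<bar>x - y\<bar> powr ((m - 1) / (m + 1))"
proof -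
  define \<beta> where "\<beta> = (m - 1) / (m + 1)"
  have \<beta>: "0 < \<beta>" "\<beta> \<le> 1" "\<beta> - 1 = - 2 / (m + 1)"
    using m_gt_1 by (simp_all add: \<beta>_def field_simps)
  obtain C where C: "\<And>z. 0 < z \<Longrightarrow> z < pi \<Longrightarrow> 1 + exp (- 2 * s_of z) \<le> C * z powr (- 2 / (m + 1))"
    using one_plus_exp_s_of_le by blast
  define C' where "C' = (1 + m) / lam * C"
  have "1 + exp (- 2 * s_of (pi / 2)) \<le> C * (pi / 2) powr (- 2 / (m + 1))"
    by (rule C) simp_all
  then have "0 < C * (pi / 2) powr (- 2 / (m + 1))"
    using exp_gt_zero[of "- 2 * s_of (pi / 2)"] by linarith
  then have "0 \<le> C"
    using zero_less_mult_pos2[of C] by fastforce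
  have bound: "\<bar>qz a z * (a - m * th z) / (lam * qz 1 z)\<bar> \<le> C' * z powr (\<beta> - 1)" if "0 < z" "z < pi" for z
    using abs_deriv_qz_le[OF assms that] mult_left_mono[OF C[OF that], of "(1 + m) / lam"] m_gt_1 lam_pos
    by (simp add: C'_def \<beta>(3) mult.assoc)
  have "continuous_on {0..pi} (qz a)"
    using assms m_gt_1 by (intro continuous_on_qz) auto
  moreover have "0 \<le> C'"
    using m_gt_1 lam_pos \<open>0 \<le> C\<close> by (simp add: C'_def)
  ultimately have "\<bar>qz a y - qz a x\<bar> \<le> C' / \<beta> * (y - x) powr \<beta>"
    if "0 \<le> x" "x \<le> y" "y \<le> pi" for x y
    using abs_diff_le_powr_of_deriv_bound[OF _ has_real_derivative_qz bound _ \<beta>(1,2) that] by blast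
  then have holder: "\<bar>qz a x - qz a y\<bar> \<le> C' / \<beta> * \<bar>x - y\<bar> powr \<beta>"
    if "x \<in> {0..pi}" "y \<in> {0..pi}" for x y
    using that by (cases "x \<le> y") (force simp: abs_minus_commute)+
  show ?thesis
    by (rule that) (rule holder[unfolded \<beta>_def])
qed

definition psi0 :: "real \<Rightarrow> real" where "psi0 z = lam * qz 1 z"
definition u0 :: "real \<Rightarrow> real" where "u0 z = m * qz 0 z"
definition om0 :: "real \<Rightarrow> real" where "om0 z = m\<^sup>2 / lam * qz (- 1) z"
definition dpsi0 :: "real \<Rightarrow> real" where "dpsi0 z = 1 - m * th z"

lemma profile_ends [simp]:
  "psi0 0 = 0" "psi0 pi = 0" "u0 0 = 0" "u0 pi = 0" "om0 0 = 0" "om0 pi = 0"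
  by (simp_all add: psi0_def u0_def om0_def)

lemma psi0_pos: "0 < z \<Longrightarrow> z < pi \<Longrightarrow> 0 < psi0 z"
  using lam_pos qz_pos by (simp add: psi0_def)

lemma continuous_on_profile:
  "continuous_on {0..pi} psi0" "continuous_on {0..pi} u0" "continuous_on {0..pi} om0"
  "continuous_on {0..pi} dpsi0"
  unfolding psi0_def[abs_def] u0_def[abs_def] om0_def[abs_def] dpsi0_def[abs_def]
  using m_gt_1 lam_pos by (auto intro!: continuous_intros continuous_on_qz continuous_on_th)

lemma psi0_om0: "psi0 z * om0 z = (u0 z)\<^sup>2"
  using lam_pos by (simp add: psi0_def om0_def u0_def qz_0_sq power_mult_distrib)

context
  fixes z :: real
  assumes z: "0 < z" "z < pi"
begin

lemma has_real_derivative_psi0: "(psi0 has_real_derivative dpsi0 z) (at z)"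
  using DERIV_cmult[OF has_real_derivative_qz[OF z, of 1], of lam] lam_pos qz_pos[OF z, of 1]
  by (simp add: psi0_def[abs_def] dpsi0_def)

lemma has_real_derivative_dpsi0: "(dpsi0 has_real_derivative - om0 z) (at z)"
  using DERIV_diff[OF DERIV_const DERIV_cmult[OF has_real_derivative_th[OF z]], of 1 m]
  by (simp add: dpsi0_def[abs_def] om0_def power2_eq_square mult.assoc)

lemma has_real_derivative_u0: "(u0 has_real_derivative u0 z * (dpsi0 z - 1) / psi0 z) (at z)"
  using DERIV_cmult[OF has_real_derivative_qz[OF z, of 0], of m]
  by (simp add: u0_def[abs_def] dpsi0_def psi0_def mult.assoc)

lemma has_real_derivative_psi0_u0:
  "((\<lambda>z. psi0 z * u0 z) has_real_derivative u0 z * (2 * dpsi0 z - 1)) (at z)"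
proof -
  have "u0 z * (dpsi0 z - 1) / psi0 z * psi0 z = u0 z * (dpsi0 z - 1)"
    using psi0_pos[OF z] by simp
  then have "dpsi0 z * u0 z + u0 z * (dpsi0 z - 1) / psi0 z * psi0 z = u0 z * (2 * dpsi0 z - 1)"
    by (simp add: algebra_simps)
  then show ?thesis
    using DERIV_mult[OF has_real_derivative_psi0 has_real_derivative_u0] by simp
qed

lemma has_real_derivative_u0_sq:
  "((\<lambda>z. (u0 z)\<^sup>2) has_real_derivative om0 z * (2 * dpsi0 z - 2)) (at z)"
proof -
  have "u0 z * (dpsi0 z - 1) / psi0 z * u0 z + u0 z * (dpsi0 z - 1) / psi0 z * u0 z
      = 2 * ((u0 z)\<^sup>2 / psi0 z) * (dpsi0 z - 1)"
    by (simp add: power2_eq_square field_simps)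
  also have "\<dots> = om0 z * (2 * dpsi0 z - 2)"
    using psi0_pos[OF z] psi0_om0[of z, symmetric] by (simp add: algebra_simps)
  finally show ?thesis
    using DERIV_mult[OF has_real_derivative_u0 has_real_derivative_u0] by (simp add: power2_eq_square)
qed

end

definition profile_psi :: "real \<Rightarrow> real" where "profile_psi = odd_ext psi0"
definition profile_u :: "real \<Rightarrow> real" where "profile_u = odd_ext u0"
definition profile_om :: "real \<Rightarrow> real" where "profile_om = odd_ext om0"
definition profile_dpsi :: "real \<Rightarrow> real" where "profile_dpsi = even_ext dpsi0"

lemma has_real_derivative_profile_psi: "(profile_psi has_real_derivative profile_dpsi z) (at z)"
  unfolding profile_psi_def profile_dpsi_def
  using continuous_on_profile has_real_derivative_psi0
  by (intro has_real_derivative_odd_ext) auto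

lemma has_real_derivative_profile_dpsi: "(profile_dpsi has_real_derivative - profile_om z) (at z)"
proof -
  have "(even_ext dpsi0 has_real_derivative odd_ext (\<lambda>z. - om0 z) z) (at z)"
    using continuous_on_profile has_real_derivative_dpsi0
    by (intro has_real_derivative_even_ext) (auto intro!: continuous_intros continuous_on_profile)
  then show ?thesis
    by (simp add: profile_dpsi_def profile_om_def odd_ext_def)
qed

lemma has_real_derivative_profile_psi_u:
  "((\<lambda>z. profile_psi z * profile_u z) has_real_derivative profile_u z * (2 * profile_dpsi z - 1)) (at z)"
proof -
  have "(even_ext (\<lambda>z. psi0 z * u0 z) has_real_derivative odd_ext (\<lambda>z. u0 z * (2 * dpsi0 z - 1)) z) (at z)"
    using continuous_on_profile has_real_derivative_psi0_u0
    by (intro has_real_derivative_even_ext) (auto intro!: continuous_intros continuous_on_profile)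
  moreover have "(\<lambda>z. profile_psi z * profile_u z) = even_ext (\<lambda>z. psi0 z * u0 z)"
    by (simp add: profile_psi_def profile_u_def odd_ext_mult)
  moreover have "odd_ext (\<lambda>z. u0 z * (2 * dpsi0 z - 1)) z = profile_u z * (2 * profile_dpsi z - 1)"
    by (simp add: profile_u_def profile_dpsi_def odd_ext_def even_ext_def)
  ultimately show ?thesis
    by simp
qed

lemma has_real_derivative_profile_u_sq:
  "((\<lambda>z. (profile_u z)\<^sup>2) has_real_derivative profile_om z * (2 * profile_dpsi z - 2)) (at z)"
proof -
  have "(even_ext (\<lambda>z. (u0 z)\<^sup>2) has_real_derivative odd_ext (\<lambda>z. om0 z * (2 * dpsi0 z - 2)) z) (at z)"
    using continuous_on_profile has_real_derivative_u0_sq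
    by (intro has_real_derivative_even_ext) (auto intro!: continuous_intros continuous_on_profile)
  moreover have "(\<lambda>z. (profile_u z)\<^sup>2) = even_ext (\<lambda>z. (u0 z)\<^sup>2)"
    by (simp add: profile_u_def odd_ext_mult power2_eq_square)
  moreover have "odd_ext (\<lambda>z. om0 z * (2 * dpsi0 z - 2)) z = profile_om z * (2 * profile_dpsi z - 2)"
    by (simp add: profile_om_def profile_dpsi_def odd_ext_def even_ext_def)
  ultimately show ?thesis
    by simp
qed

lemma profile_psi_om: "profile_psi z * profile_om z = (profile_u z)\<^sup>2"
  by (simp add: profile_psi_def profile_om_def profile_u_def odd_ext_mult psi0_om0 power2_eq_square)

lemma continuous_on_profile_u: "continuous_on UNIV profile_u"
  and continuous_on_profile_om: "continuous_on UNIV profile_om"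
  unfolding profile_u_def profile_om_def
  by (simp_all add: continuous_on_odd_ext continuous_on_profile)

lemma profile_periodic_odd:
  "periodic2pi profile_psi" "periodic2pi profile_u" "periodic2pi profile_om"
  "odd_fun profile_psi" "odd_fun profile_u" "odd_fun profile_om"
  by (simp_all add: profile_psi_def profile_u_def profile_om_def periodic2pi_odd_ext odd_fun_odd_ext)

lemma profile_om_nonzero: "profile_om (pi / 2) \<noteq> 0"
  using qz_pos[of "pi / 2" "- 1"] lam_pos m_gt_1
  by (simp add: profile_om_def odd_ext_eq om0_def)

lemma holder_profile:
  "holder ((m - 1) / (m + 1)) profile_psi" "holder ((m - 1) / (m + 1)) profile_u"
  "holder ((m - 1) / (m + 1)) profile_om"
proof -
  have holder_scaled: "holder ((m - 1) / (m + 1)) (odd_ext (\<lambda>z. c * qz a z))"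
    if a: "- 1 \<le> a" "a \<le> 1" for a c
  proof -
    obtain K where K: "\<And>x y. x \<in> {0..pi} \<Longrightarrow> y \<in> {0..pi} \<Longrightarrow>
        \<bar>qz a x - qz a y\<bar> \<le> K * \<bar>x - y\<bar> powr ((m - 1) / (m + 1))"
      using holder_bound_qz[OF a] by blast
    show ?thesis
    proof (rule holder_odd_ext)
      show "\<bar>c * qz a x - c * qz a y\<bar> \<le> (\<bar>c\<bar> * K) * \<bar>x - y\<bar> powr ((m - 1) / (m + 1))"
        if "x \<in> {0..pi}" "y \<in> {0..pi}" for x y
        using mult_left_mono[OF K[OF that] abs_ge_zero[of c]]
        by (simp add: abs_mult mult.assoc flip: right_diff_distrib)
    qed (use m_gt_1 in auto)
  qed
  show "holder ((m - 1) / (m + 1)) profile_psi" "holder ((m - 1) / (m + 1)) profile_u"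
    "holder ((m - 1) / (m + 1)) profile_om"
    using holder_scaled[of 1 lam] holder_scaled[of 0 m] holder_scaled[of "- 1" "m\<^sup>2 / lam"]
    by (simp_all add: profile_psi_def profile_u_def profile_om_def psi0_def[abs_def] u0_def[abs_def] om0_def[abs_def])
qed

end

section \<open>Self-similar weak solutions\<close>

lemma stream_fun_of_derivatives:
  assumes "\<And>z. (\<psi> has_real_derivative d\<psi> z) (at z)" "\<And>z. (d\<psi> has_real_derivative - \<omega> z) (at z)"
  shows "stream_fun \<psi> \<omega>"
proof -
  have "deriv \<psi> = d\<psi>"
    using assms(1) DERIV_imp_deriv by blast
  then show ?thesis
    using assms by (auto simp: stream_fun_def real_differentiable_def)
qed

lemma periodic_integration_by_parts:
  assumes "\<And>x. (H has_real_derivative h x) (at x)" "H (2 * pi) = H 0" "test_fun \<phi> d\<phi>"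
  shows "((\<lambda>z. h z * \<phi> z + H z * d\<phi> z) has_integral 0) {0..2 * pi}"
proof -
  have "\<phi> (2 * pi) = \<phi> 0" "\<And>x. (\<phi> has_real_derivative d\<phi> x) (at x)"
    using assms(3) unfolding test_fun_def periodic2pi_def by (metis add_0, blast)
  then have "((\<lambda>z. h z * \<phi> z + H z * d\<phi> z) has_integral H (2 * pi) * \<phi> (2 * pi) - H 0 * \<phi> 0) {0..2 * pi}"
    using assms(1)
    by (intro fundamental_theorem_of_calculus)
      (auto intro!: derivative_eq_intros simp: has_real_derivative_iff_has_vector_derivative[symmetric]
        intro: has_field_derivative_at_within)
  then show ?thesis
    using assms(2) \<open>\<phi> (2 * pi) = \<phi> 0\<close> by simp
qed

text \<open>The hypotheses on \<open>(\<psi> u)'\<close> and \<open>(u\<^sup>2)'\<close> are the profile equations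
  \<open>-c u + 2 \<psi> u' = 2 u \<psi>'\<close> and \<open>-c \<omega> + 2 \<psi> \<omega>' = (u\<^sup>2)'\<close> rewritten with \<open>\<psi> \<omega> = u\<^sup>2\<close>.\<close>

lemma weak_profile_equations:
  fixes c :: real and \<psi> u \<omega> d\<psi> \<phi> d\<phi> :: "real \<Rightarrow> real"
  assumes cont: "continuous_on UNIV u" "continuous_on UNIV \<omega>"
    and per: "periodic2pi \<psi>" "periodic2pi u"
    and \<psi>u': "\<And>z. ((\<lambda>z. \<psi> z * u z) has_real_derivative u z * (2 * d\<psi> z + c / 2)) (at z)"
    and u_sq': "\<And>z. ((\<lambda>z. (u z)\<^sup>2) has_real_derivative \<omega> z * (2 * d\<psi> z + c)) (at z)"
    and \<psi>\<omega>: "\<And>z. \<psi> z * \<omega> z = (u z)\<^sup>2"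
    and \<phi>: "test_fun \<phi> d\<phi>"
  shows "((\<lambda>z. 2 * \<psi> z * u z * d\<phi> z + 4 * u z * d\<psi> z * \<phi> z)
      has_integral - c * integral {0..2 * pi} (\<lambda>z. u z * \<phi> z)) {0..2 * pi}" (is ?u_eq)
    and "((\<lambda>z. 2 * \<psi> z * \<omega> z * d\<phi> z + 2 * d\<psi> z * \<omega> z * \<phi> z - (u z)\<^sup>2 * d\<phi> z)
      has_integral - c * integral {0..2 * pi} (\<lambda>z. \<omega> z * \<phi> z)) {0..2 * pi}" (is ?\<omega>_eq)
proof -
  have "continuous_on UNIV \<phi>"
    using \<phi> unfolding test_fun_def by (meson DERIV_isCont continuous_at_imp_continuous_on)
  then have integrable: "(\<lambda>z. f z * \<phi> z) integrable_on {0..2 * pi}" if "continuous_on UNIV f" for f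
    using that by (intro integrable_continuous_real continuous_on_mult) (auto intro: continuous_on_subset)
  show ?u_eq
  proof -
    have "((\<lambda>z. 2 * (u z * (2 * d\<psi> z + c / 2) * \<phi> z + \<psi> z * u z * d\<phi> z) - c * (u z * \<phi> z))
        has_integral 2 * 0 - c * integral {0..2 * pi} (\<lambda>z. u z * \<phi> z)) {0..2 * pi}"
      using per(1,2) unfolding periodic2pi_def
      by (intro has_integral_diff has_integral_mult_right periodic_integration_by_parts[OF \<psi>u' _ \<phi>]
          integrable_integral integrable cont) (metis add_0)
    then show ?thesis
      by (simp add: algebra_simps)
  qed
  show ?\<omega>_eq
  proof -
    have "((\<lambda>z. (\<omega> z * (2 * d\<psi> z + c) * \<phi> z + (u z)\<^sup>2 * d\<phi> z) - c * (\<omega> z * \<phi> z))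
        has_integral 0 - c * integral {0..2 * pi} (\<lambda>z. \<omega> z * \<phi> z)) {0..2 * pi}"
      using per(2) unfolding periodic2pi_def
      by (intro has_integral_diff has_integral_mult_right periodic_integration_by_parts[OF u_sq' _ \<phi>]
          integrable_integral integrable cont) (metis add_0)
    moreover have "(\<lambda>z. (\<omega> z * (2 * d\<psi> z + c) * \<phi> z + (u z)\<^sup>2 * d\<phi> z) - c * (\<omega> z * \<phi> z)) =
        (\<lambda>z. 2 * \<psi> z * \<omega> z * d\<phi> z + 2 * d\<psi> z * \<omega> z * \<phi> z - (u z)\<^sup>2 * d\<phi> z)"
      by (simp add: \<psi>\<omega>[symmetric] algebra_simps)
    ultimately show ?thesis
      by simp
  qed
qed

lemma weak_sol_HL_self_similar:
  fixes c :: real and \<psi> u \<omega> d\<psi> :: "real \<Rightarrow> real"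
  assumes "c < 0"
    and cont: "continuous_on UNIV u" "continuous_on UNIV \<omega>"
    and per: "periodic2pi \<psi>" "periodic2pi u" "periodic2pi \<omega>"
    and odd: "odd_fun \<psi>" "odd_fun u" "odd_fun \<omega>"
    and \<psi>': "\<And>z. (\<psi> has_real_derivative d\<psi> z) (at z)"
    and d\<psi>': "\<And>z. (d\<psi> has_real_derivative - \<omega> z) (at z)"
    and \<psi>u': "\<And>z. ((\<lambda>z. \<psi> z * u z) has_real_derivative u z * (2 * d\<psi> z + c / 2)) (at z)"
    and u_sq': "\<And>z. ((\<lambda>z. (u z)\<^sup>2) has_real_derivative \<omega> z * (2 * d\<psi> z + c)) (at z)"
    and \<psi>\<omega>: "\<And>z. \<psi> z * \<omega> z = (u z)\<^sup>2"
  shows "weak_sol_HL (- 1 / c) (\<lambda>z t. \<omega> z / (1 + c * t)) (\<lambda>z t. u z / (1 + c * t))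
    (\<lambda>z t. \<psi> z / (1 + c * t))"
  unfolding weak_sol_HL_def
proof (intro conjI ballI allI impI)
  fix t assume "t \<in> {0..<- 1 / c}"
  then have "1 + c * t \<noteq> 0"
    using \<open>c < 0\<close> by (auto simp: field_simps)
  then show "continuous_on UNIV (\<lambda>z. u z / (1 + c * t))" "continuous_on UNIV (\<lambda>z. \<omega> z / (1 + c * t))"
    using cont by (auto intro!: continuous_intros)
  show "periodic2pi (\<lambda>z. u z / (1 + c * t))" "periodic2pi (\<lambda>z. \<omega> z / (1 + c * t))"
    "periodic2pi (\<lambda>z. \<psi> z / (1 + c * t))"
    using per by (simp_all add: periodic2pi_def)
  show "odd_fun (\<lambda>z. u z / (1 + c * t))" "odd_fun (\<lambda>z. \<omega> z / (1 + c * t))"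
    "odd_fun (\<lambda>z. \<psi> z / (1 + c * t))"
    using odd by (simp_all add: odd_fun_def)
  show "stream_fun (\<lambda>z. \<psi> z / (1 + c * t)) (\<lambda>z. \<omega> z / (1 + c * t))"
    using DERIV_cdivide[OF \<psi>'] DERIV_cdivide[OF d\<psi>'] by (intro stream_fun_of_derivatives) auto
next
  fix \<phi> d\<phi> :: "real \<Rightarrow> real" assume \<phi>: "test_fun \<phi> d\<phi>"
  have pos: "0 < 1 + c * t" if "t < - 1 / c" for t
    using that \<open>c < 0\<close> by (simp add: field_simps)
  have deriv_scaled: "deriv (\<lambda>y. \<psi> y / d) z = d\<psi> z / d" for d z
    by (rule DERIV_imp_deriv) (rule DERIV_cdivide[OF \<psi>'])
  define Iu I\<omega> where "Iu = integral {0..2 * pi} (\<lambda>z. u z * \<phi> z)"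
    and "I\<omega> = integral {0..2 * pi} (\<lambda>z. \<omega> z * \<phi> z)"
  have Iu: "integral {0..2 * pi} (\<lambda>z. u z / (1 + c * s) * \<phi> z) = Iu / (1 + c * s)"
    and I\<omega>: "integral {0..2 * pi} (\<lambda>z. \<omega> z / (1 + c * s) * \<phi> z) = I\<omega> / (1 + c * s)" for s
    by (simp_all add: Iu_def I\<omega>_def)
  note eq_u = weak_profile_equations(1)[OF cont per(1,2) \<psi>u' u_sq' \<psi>\<omega> \<phi>, folded Iu_def]
    and eq_\<omega> = weak_profile_equations(2)[OF cont per(1,2) \<psi>u' u_sq' \<psi>\<omega> \<phi>, folded I\<omega>_def]
  show "continuous_on {0..<- 1 / c} (\<lambda>t. integral {0..2 * pi} (\<lambda>z. u z / (1 + c * t) * \<phi> z))"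
    "continuous_on {0..<- 1 / c} (\<lambda>t. integral {0..2 * pi} (\<lambda>z. \<omega> z / (1 + c * t) * \<phi> z))"
    unfolding Iu I\<omega> using pos by (auto intro!: continuous_intros simp: less_imp_neq[symmetric])
  fix t assume "t \<in> {0<..<- 1 / c}"
  then have "0 < 1 + c * t"
    using pos by simp
  then have time_deriv: "((\<lambda>s. I / (1 + c * s)) has_real_derivative 1 / (1 + c * t)\<^sup>2 * (- c * I)) (at t)"
    for I
    by (auto intro!: derivative_eq_intros simp: power2_eq_square field_simps)
  have "(\<lambda>z. 2 * (\<psi> z / (1 + c * t)) * (u z / (1 + c * t)) * d\<phi> z
        + 4 * (u z / (1 + c * t)) * deriv (\<lambda>y. \<psi> y / (1 + c * t)) z * \<phi> z)
      = (\<lambda>z. 1 / (1 + c * t)\<^sup>2 * (2 * \<psi> z * u z * d\<phi> z + 4 * u z * d\<psi> z * \<phi> z))"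
    by (intro ext) (simp add: deriv_scaled power2_eq_square add_divide_distrib diff_divide_distrib mult_ac)
  then show "((\<lambda>s. integral {0..2 * pi} (\<lambda>z. u z / (1 + c * s) * \<phi> z)) has_real_derivative
      integral {0..2 * pi} (\<lambda>z. 2 * (\<psi> z / (1 + c * t)) * (u z / (1 + c * t)) * d\<phi> z
        + 4 * (u z / (1 + c * t)) * deriv (\<lambda>y. \<psi> y / (1 + c * t)) z * \<phi> z)) (at t)"
    using time_deriv[of Iu] integral_unique[OF eq_u] by (simp add: Iu_def[symmetric])
  have "(\<lambda>z. 2 * (\<psi> z / (1 + c * t)) * (\<omega> z / (1 + c * t)) * d\<phi> z
        + 2 * deriv (\<lambda>y. \<psi> y / (1 + c * t)) z * (\<omega> z / (1 + c * t)) * \<phi> z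
        - (u z / (1 + c * t))\<^sup>2 * d\<phi> z)
      = (\<lambda>z. 1 / (1 + c * t)\<^sup>2 *
          (2 * \<psi> z * \<omega> z * d\<phi> z + 2 * d\<psi> z * \<omega> z * \<phi> z - (u z)\<^sup>2 * d\<phi> z))"
    by (intro ext) (simp add: deriv_scaled power2_eq_square add_divide_distrib diff_divide_distrib mult_ac)
  then show "((\<lambda>s. integral {0..2 * pi} (\<lambda>z. \<omega> z / (1 + c * s) * \<phi> z)) has_real_derivative
      integral {0..2 * pi} (\<lambda>z. 2 * (\<psi> z / (1 + c * t)) * (\<omega> z / (1 + c * t)) * d\<phi> z
        + 2 * deriv (\<lambda>y. \<psi> y / (1 + c * t)) z * (\<omega> z / (1 + c * t)) * \<phi> z
        - (u z / (1 + c * t))\<^sup>2 * d\<phi> z)) (at t)"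
    using time_deriv[of I\<omega>] integral_unique[OF eq_\<omega>] by (simp add: I\<omega>_def[symmetric])
qed

lemma self_similar_blowup_exists:
  fixes \<alpha> :: real
  assumes "0 < \<alpha>" "\<alpha> < 1"
  shows "\<exists>\<omega>inf uinf \<psi>inf :: real \<Rightarrow> real. \<exists>c::real. c < 0 \<and>
    holder \<alpha> \<omega>inf \<and> holder \<alpha> uinf \<and> holder \<alpha> \<psi>inf \<and>
    periodic2pi \<omega>inf \<and> periodic2pi uinf \<and> periodic2pi \<psi>inf \<and>
    odd_fun \<omega>inf \<and> odd_fun uinf \<and> odd_fun \<psi>inf \<and>
    stream_fun \<psi>inf \<omega>inf \<and> (\<exists>z. \<omega>inf z \<noteq> 0) \<and>
    weak_sol_HL (- 1 / c) (\<lambda>z t. \<omega>inf z / (1 + c * t)) (\<lambda>z t. uinf z / (1 + c * t))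
      (\<lambda>z t. \<psi>inf z / (1 + c * t))"
proof -
  define m where "m = (1 + \<alpha>) / (1 - \<alpha>)"
  have "1 < m" "(m - 1) / (m + 1) = \<alpha>"
    using assms by (simp_all add: m_def field_simps)
  then interpret hou_li_profile m
    by unfold_locales
  have "weak_sol_HL (- 1 / - 2) (\<lambda>z t. profile_om z / (1 + - 2 * t))
    (\<lambda>z t. profile_u z / (1 + - 2 * t)) (\<lambda>z t. profile_psi z / (1 + - 2 * t))"
    using has_real_derivative_profile_psi_u has_real_derivative_profile_u_sq
    by (intro weak_sol_HL_self_similar[where d\<psi> = profile_dpsi] continuous_on_profile_u
        continuous_on_profile_om profile_periodic_odd has_real_derivative_profile_psi
        has_real_derivative_profile_dpsi profile_psi_om) simp_all
  moreover have "stream_fun profile_psi profile_om"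
    by (rule stream_fun_of_derivatives[OF has_real_derivative_profile_psi has_real_derivative_profile_dpsi])
  ultimately show ?thesis
    using holder_profile profile_periodic_odd profile_om_nonzero \<open>(m - 1) / (m + 1) = \<alpha>\<close>
    by (intro exI[of _ profile_om] exI[of _ profile_u] exI[of _ profile_psi] exI[of _ "- 2"]) auto
qed

theorem theorem2:
  shows "\<exists>\<delta>0::real. 0 < \<delta>0 \<and> \<delta>0 < 1 \<and>
    (\<forall>\<alpha>. 1 - \<delta>0 < \<alpha> \<and> \<alpha> < 1 \<longrightarrow>
      (\<exists>\<omega>inf uinf \<psi>inf :: real \<Rightarrow> real. \<exists>c::real.
         c < 0 \<and>
         holder \<alpha> \<omega>inf \<and> holder \<alpha> uinf \<and> holder \<alpha> \<psi>inf \<and>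
         periodic2pi \<omega>inf \<and> periodic2pi uinf \<and> periodic2pi \<psi>inf \<and>
         odd_fun \<omega>inf \<and> odd_fun uinf \<and> odd_fun \<psi>inf \<and>
         stream_fun \<psi>inf \<omega>inf \<and>
         (\<exists>z. \<omega>inf z \<noteq> 0) \<and>
         weak_sol_HL (- 1 / c)
           (\<lambda>z t. \<omega>inf z / (1 + c * t))
           (\<lambda>z t. uinf z / (1 + c * t))
           (\<lambda>z t. \<psi>inf z / (1 + c * t))))"
  using self_similar_blowup_exists by (intro exI[of _ "1 / 2"]) auto

end
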